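(* Let $R$ be a $*$-ring with unity, $a,b\in R$ with $a\lesssim b$, and $h$ a central projection of $R$. Then $ha\lesssim hb$.
   Context: Natural partial order: $a\leq b$ iff there is $x\in R$ with $a=xa=xb=ax^*=bx^*$. Equivalence: $a\sim b$ iff there exist $x,y\in R$ with $aa^*=xx^*$, $bb^*=yy^*$, $a^*a=y^*y$, $b^*b=x^*x$, $x=ax=xb$ and $y=by=ya$. Dominance: $a\lesssim b$ iff $a\sim c$ and $c\leq b$ for some $c\in R$. A projection is $e=e^2=e^*$; central means commuting with all elements. *)

theory Defs
  imports Main
begin

class star_ring = ring_1 +
  fixes star :: "'a \<Rightarrow> 'a"
  assumes star_add: "star (x + y) = star x + star y"
    and star_mult: "star (x * y) = star y * star x"
    and star_star: "star (star x) = x"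

context star_ring
begin

definition npo_le :: "'a \<Rightarrow> 'a \<Rightarrow> bool" where
  "npo_le a b \<longleftrightarrow> (\<exists>x. a = x * a \<and> a = x * b \<and> a = a * star x \<and> a = b * star x)"

definition star_equiv :: "'a \<Rightarrow> 'a \<Rightarrow> bool" where
  "star_equiv a b \<longleftrightarrow> (\<exists>x y. a * star a = x * star x \<and> b * star b = y * star y \<and>
      star a * a = star y * y \<and> star b * b = star x * x \<and>
      x = a * x \<and> x = x * b \<and> y = b * y \<and> y = y * a)"

definition dominated :: "'a \<Rightarrow> 'a \<Rightarrow> bool" where
  "dominated a b \<longleftrightarrow> (\<exists>c. star_equiv a c \<and> npo_le c b)"

definition projection :: "'a \<Rightarrow> bool" where
  "projection e \<longleftrightarrow> e * e = e \<and> star e = e"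

definition central :: "'a \<Rightarrow> bool" where
  "central h \<longleftrightarrow> (\<forall>z. h * z = z * h)"

end

end

theory Submission
  imports Defs
begin

(* Since h is a central projection, u \<mapsto> h * u is multiplicative and commutes with star, so
   multiplying the witnesses x, y of the equivalence by h gives witnesses for h * a and h * c;
   the witness z of c \<le> b works unchanged for h * c \<le> h * b. *)

context star_ring
begin

lemma star_mult_central_projection:
  assumes "projection h" and "central h"
  shows "star (h * u) = h * star u"
proof -
  have "star (h * u) = star u * h"
    using \<open>projection h\<close> by (simp add: projection_def star_mult)
  also have "\<dots> = h * star u"
    using \<open>central h\<close> by (simp add: central_def)
  finally show ?thesis .
qed

lemma central_projection_mult_mult:
  assumes "projection h" and "central h"
  shows "h * u * (h * v) = h * (u * v)"
proof -
  have "h * u * (h * v) = (h * h) * (u * v)"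
    using \<open>central h\<close> unfolding central_def by (metis mult.assoc)
  then show ?thesis
    using \<open>projection h\<close> by (simp add: projection_def)
qed

lemma star_equiv_mult_central_projection:
  assumes "star_equiv a c" and "projection h" and "central h"
  shows "star_equiv (h * a) (h * c)"
proof -
  obtain x y where xy:
    "a * star a = x * star x" "c * star c = y * star y"
    "star a * a = star y * y" "star c * c = star x * x"
    "x = a * x" "x = x * c" "y = c * y" "y = y * a"
    using \<open>star_equiv a c\<close> unfolding star_equiv_def by blast
  note hstar = star_mult_central_projection[OF assms(2,3)]
    and hmult = central_projection_mult_mult[OF assms(2,3)]
  have "h * a * star (h * a) = h * x * star (h * x)"
    "h * c * star (h * c) = h * y * star (h * y)"
    "star (h * a) * (h * a) = star (h * y) * (h * y)"
    "star (h * c) * (h * c) = star (h * x) * (h * x)"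
    by (simp_all only: hstar hmult xy(1-4))
  moreover have "h * x = h * a * (h * x)" "h * x = h * x * (h * c)"
    "h * y = h * c * (h * y)" "h * y = h * y * (h * a)"
    by (simp_all only: hmult flip: xy(5-8))
  ultimately show ?thesis
    unfolding star_equiv_def by blast
qed

lemma npo_le_mult_central:
  assumes "npo_le c b" and "central h"
  shows "npo_le (h * c) (h * b)"
proof -
  obtain z where z: "c = z * c" "c = z * b" "c = c * star z" "c = b * star z"
    using \<open>npo_le c b\<close> unfolding npo_le_def by blast
  have comm: "h * (z * u) = z * (h * u)" for u
    using \<open>central h\<close> unfolding central_def by (metis mult.assoc)
  have "h * c = z * (h * c)" "h * c = z * (h * b)"
    by (metis z(1) comm, metis z(2) comm)
  moreover have "h * c = h * c * star z" "h * c = h * b * star z"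
    by (metis z(3) mult.assoc, metis z(4) mult.assoc)
  ultimately show ?thesis
    unfolding npo_le_def by blast
qed

end

theorem mainTheorem10:
  fixes a b h :: "'a :: star_ring"
  assumes "dominated a b"
    and "projection h" and "central h"
  shows "dominated (h * a) (h * b)"
proof -
  obtain c where "star_equiv a c" and "npo_le c b"
    using \<open>dominated a b\<close> unfolding dominated_def by blast
  have "star_equiv (h * a) (h * c)"
    using star_equiv_mult_central_projection[OF \<open>star_equiv a c\<close> assms(2,3)] .
  moreover have "npo_le (h * c) (h * b)"
    using npo_le_mult_central[OF \<open>npo_le c b\<close> assms(3)] .
  ultimately show ?thesis
    unfolding dominated_def by blast
qed

end
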